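(* Let $1\le k<n$. Every RYD in $\mathbb{Y}_{OG(k,2n)}$ is a $W^{OG(k,2n)}$-diagram, i.e. $\mathbb{Y}_{OG(k,2n)}\subseteq\Theta(k,2n)$.
   Context: Root system $D_n$: positive roots $e_a\pm e_b$ ($a<b$); simple roots $e_i-e_{i+1}$ ($i<n$), $e_{n-1}+e_n$; order $\alpha\le\beta$ iff $\beta-\alpha$ is a nonnegative integer combination of simple roots. $W^{OG(k,2n)}$ is the set of signed permutations $w=(y_1,\dots,y_{k-r},\overline{z_r},\dots,\overline{z_1},v_1,\dots,v_{n-k-1},\widehat{v_{n-k}})$ of $1,\dots,n$ with an even number of barred (negative) entries, $0\le r\le k$, $y_1<\dots<y_{k-r}$, $z_r>\dots>z_1$, $v_1<\dots<v_{n-k}$, $\widehat{v_{n-k}}\in\{v_{n-k},\overline{v_{n-k}}\}$ according to the parity of $r$. $w$ acts by $e_a\mapsto\pm e_{|w(a)|}$ (minus if barred); $\mathrm{Inv}(w)$ is the set of positive roots sent to negative roots, and $\mathbb{Y}_{OG(k,2n)}=\{\mathrm{Inv}(w)\}$. Base region: roots $e_a\pm e_b$ with $a\le k<b$; its $i$-th double-tailed diamond ($1\le i\le k$) consists of the $2n-2k$ roots $e_{k+1-i}\pm e_b$, $b>k$. Top region: roots $e_a+e_b$ with $a<b\le k$. A subset $S$ of the union of the two regions is a $W^{OG(k,2n)}$-diagram if it meets each region in a lower order ideal of that region and, for each top root $e_a+e_b$, $e_a+e_b\in S$ whenever $S$ contains more than $2n-2k$ roots of the double-tailed diamonds indexed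 by $a$ and $b$ (i.e. diamonds $k+1-a$ and $k+1-b$) combined, and $e_a+e_b\notin S$ whenever it contains fewer than $2n-2k$ of them. $\Theta(k,2n)$ is the set of such diagrams. *)

theory Defs
  imports Main
begin

text \<open>Vectors in Z^n are modelled as functions nat => int (coordinates 1..n).\<close>

definition ee :: "nat \<Rightarrow> nat \<Rightarrow> int" where
  "ee a = (\<lambda>i. if i = a then 1 else 0)"

definition rplus :: "nat \<Rightarrow> nat \<Rightarrow> nat \<Rightarrow> int" where
  "rplus a b = (\<lambda>i. ee a i + ee b i)"

definition rminus :: "nat \<Rightarrow> nat \<Rightarrow> nat \<Rightarrow> int" where
  "rminus a b = (\<lambda>i. ee a i - ee b i)"

definition pos_roots :: "nat \<Rightarrow> (nat \<Rightarrow> int) set" where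
  "pos_roots n = {rplus a b | a b. 1 \<le> a \<and> a < b \<and> b \<le> n}
               \<union> {rminus a b | a b. 1 \<le> a \<and> a < b \<and> b \<le> n}"

definition root_le :: "nat \<Rightarrow> (nat \<Rightarrow> int) \<Rightarrow> (nat \<Rightarrow> int) \<Rightarrow> bool" where
  "root_le n \<alpha> \<beta> \<longleftrightarrow> (\<exists>c :: nat \<Rightarrow> nat. \<forall>j.
      \<beta> j - \<alpha> j = (\<Sum>i\<in>{1..<n}. int (c i) * rminus i (Suc i) j)
                     + int (c n) * rplus (n - 1) n j)"

text \<open>Signed permutations of 1..n: w a is the (possibly negated) image of a.\<close>
definition signed_perm :: "nat \<Rightarrow> (nat \<Rightarrow> int) \<Rightarrow> bool" where
  "signed_perm n w \<longleftrightarrow> bij_betw (\<lambda>a. nat \<bar>w a\<bar>) {1..n} {1..n}"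

definition act :: "nat \<Rightarrow> (nat \<Rightarrow> int) \<Rightarrow> (nat \<Rightarrow> int) \<Rightarrow> (nat \<Rightarrow> int)" where
  "act n w v = (\<lambda>j. \<Sum>a\<in>{1..n}. if nat \<bar>w a\<bar> = j then sgn (w a) * v a else 0)"

definition Inv :: "nat \<Rightarrow> (nat \<Rightarrow> int) \<Rightarrow> (nat \<Rightarrow> int) set" where
  "Inv n w = {\<alpha> \<in> pos_roots n. (\<lambda>j. - act n w \<alpha> j) \<in> pos_roots n}"

text \<open>The set W^{OG(k,2n)}: w = (y_1..y_{k-r}, bar z_r .. bar z_1, v_1 .. v_{n-k-1}, hat v_{n-k}).\<close>
definition W_OG :: "nat \<Rightarrow> nat \<Rightarrow> (nat \<Rightarrow> int) set" where
  "W_OG k n = {w. signed_perm n w \<and> even (card {a \<in> {1..n}. w a < 0}) \<and>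
     (\<exists>r \<le> k.
        (\<forall>a \<in> {1..k - r}. w a > 0) \<and>
        (\<forall>a b. 1 \<le> a \<longrightarrow> a < b \<longrightarrow> b \<le> k - r \<longrightarrow> w a < w b) \<and>
        (\<forall>a \<in> {k - r + 1..k}. w a < 0) \<and>
        (\<forall>a b. k - r < a \<longrightarrow> a < b \<longrightarrow> b \<le> k \<longrightarrow> \<bar>w a\<bar> > \<bar>w b\<bar>) \<and>
        (\<forall>a \<in> {k + 1..<n}. w a > 0) \<and>
        (\<forall>a b. k < a \<longrightarrow> a < b \<longrightarrow> b \<le> n \<longrightarrow> \<bar>w a\<bar> < \<bar>w b\<bar>) \<and>
        (w n < 0 \<longleftrightarrow> odd r))}"

definition Y_OG :: "nat \<Rightarrow> nat \<Rightarrow> (nat \<Rightarrow> int) set set" where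
  "Y_OG k n = Inv n ` W_OG k n"

definition base_region :: "nat \<Rightarrow> nat \<Rightarrow> (nat \<Rightarrow> int) set" where
  "base_region k n = {rplus a b | a b. 1 \<le> a \<and> a \<le> k \<and> k < b \<and> b \<le> n}
                   \<union> {rminus a b | a b. 1 \<le> a \<and> a \<le> k \<and> k < b \<and> b \<le> n}"

definition top_region :: "nat \<Rightarrow> (nat \<Rightarrow> int) set" where
  "top_region k = {rplus a b | a b. 1 \<le> a \<and> a < b \<and> b \<le> k}"

definition diamond :: "nat \<Rightarrow> nat \<Rightarrow> nat \<Rightarrow> (nat \<Rightarrow> int) set" where
  "diamond k n i = {rplus (k + 1 - i) b | b. k < b \<and> b \<le> n}
                 \<union> {rminus (k + 1 - i) b | b. k < b \<and> b \<le> n}"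

definition lower_ideal :: "nat \<Rightarrow> (nat \<Rightarrow> int) set \<Rightarrow> (nat \<Rightarrow> int) set \<Rightarrow> bool" where
  "lower_ideal n R S \<longleftrightarrow> S \<subseteq> R \<and> (\<forall>\<beta> \<in> S. \<forall>\<alpha> \<in> R. root_le n \<alpha> \<beta> \<longrightarrow> \<alpha> \<in> S)"

definition Theta :: "nat \<Rightarrow> nat \<Rightarrow> (nat \<Rightarrow> int) set set" where
  "Theta k n = {S. S \<subseteq> base_region k n \<union> top_region k \<and>
     lower_ideal n (base_region k n) (S \<inter> base_region k n) \<and>
     lower_ideal n (top_region k) (S \<inter> top_region k) \<and>
     (\<forall>a b. 1 \<le> a \<longrightarrow> a < b \<longrightarrow> b \<le> k \<longrightarrow>
        (card (S \<inter> (diamond k n (k + 1 - a) \<union> diamond k n (k + 1 - b))) > 2 * n - 2 * k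
            \<longrightarrow> rplus a b \<in> S) \<and>
        (card (S \<inter> (diamond k n (k + 1 - a) \<union> diamond k n (k + 1 - b))) < 2 * n - 2 * k
            \<longrightarrow> rplus a b \<notin> S))}"

end

theory Submission
  imports Defs
begin

text \<open>A root \<open>e\<^sub>a \<plusminus> e\<^sub>b\<close> is an inversion of a signed permutation \<open>w\<close> iff its image has a negative
  coefficient at the smaller of the indices \<open>\<bar>w a\<bar>, \<bar>w b\<bar>\<close>. For \<open>w \<in> W_OG k n\<close> the entries in
  positions \<open>1..k\<close> are first positive and increasing, then negative with decreasing absolute
  values, while the tail \<open>k+1..n\<close> has increasing absolute values and only its last entry may be
  negative. Hence no root outside the base and top regions is an inversion, and the inversion
  criterion is monotone along the root order within each region; the order is detected by linear
  forms that are nonnegative on the simple roots. For a top root \<open>e\<^sub>a + e\<^sub>b\<close> the two diamonds split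
  into the columns \<open>{e\<^sub>a \<plusminus> e\<^sub>c, e\<^sub>b \<plusminus> e\<^sub>c}\<close>, \<open>k < c \<le> n\<close>, and each column holds at least two
  inversions if \<open>e\<^sub>a + e\<^sub>b\<close> is one and at most two otherwise.\<close>

definition lin_form :: "nat \<Rightarrow> (nat \<Rightarrow> int) \<Rightarrow> (nat \<Rightarrow> int) \<Rightarrow> int" where
  "lin_form n \<phi> v = (\<Sum>j\<in>{1..n}. \<phi> j * v j)"

lemma lin_form_ee: "a \<in> {1..n} \<Longrightarrow> lin_form n \<phi> (ee a) = \<phi> a"
  unfolding lin_form_def ee_def by (simp add: if_distrib cong: if_cong)

lemma lin_form_rplus: "a \<in> {1..n} \<Longrightarrow> b \<in> {1..n} \<Longrightarrow> lin_form n \<phi> (rplus a b) = \<phi> a + \<phi> b"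
  using lin_form_ee[of a n \<phi>] lin_form_ee[of b n \<phi>]
  unfolding lin_form_def rplus_def by (simp add: distrib_left sum.distrib)

lemma lin_form_rminus: "a \<in> {1..n} \<Longrightarrow> b \<in> {1..n} \<Longrightarrow> lin_form n \<phi> (rminus a b) = \<phi> a - \<phi> b"
  using lin_form_ee[of a n \<phi>] lin_form_ee[of b n \<phi>]
  unfolding lin_form_def rminus_def by (simp add: right_diff_distrib sum_subtractf)

lemma root_le_lin_form_mono:
  assumes "root_le n \<alpha> \<beta>" and "2 \<le> n"
    and "\<And>i. i \<in> {1..<n} \<Longrightarrow> \<phi> (Suc i) \<le> \<phi> i" and "0 \<le> \<phi> (n - 1) + \<phi> n"
  shows "lin_form n \<phi> \<alpha> \<le> lin_form n \<phi> \<beta>"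
proof -
  obtain c :: "nat \<Rightarrow> nat" where c: "\<And>j. \<beta> j - \<alpha> j = (\<Sum>i\<in>{1..<n}. int (c i) * rminus i (Suc i) j)
                     + int (c n) * rplus (n - 1) n j"
    using assms(1) unfolding root_le_def by blast
  have "lin_form n \<phi> \<beta> - lin_form n \<phi> \<alpha> = (\<Sum>j\<in>{1..n}. \<phi> j * (\<beta> j - \<alpha> j))"
    unfolding lin_form_def by (simp add: right_diff_distrib sum_subtractf)
  also have "\<dots> = (\<Sum>j\<in>{1..n}. (\<Sum>i\<in>{1..<n}. int (c i) * (\<phi> j * rminus i (Suc i) j)))
                 + int (c n) * (\<Sum>j\<in>{1..n}. \<phi> j * rplus (n - 1) n j)"
    unfolding c by (simp add: distrib_left sum.distrib sum_distrib_left algebra_simps)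
  also have "\<dots> = (\<Sum>i\<in>{1..<n}. int (c i) * lin_form n \<phi> (rminus i (Suc i)))
                 + int (c n) * lin_form n \<phi> (rplus (n - 1) n)"
    unfolding lin_form_def by (subst sum.swap) (simp add: sum_distrib_left)
  also have "\<dots> \<ge> 0"
    using assms(2-4) by (intro add_nonneg_nonneg sum_nonneg mult_nonneg_nonneg)
      (auto simp: lin_form_rminus lin_form_rplus)
  finally show ?thesis by simp
qed

definition pm_root :: "bool \<Rightarrow> nat \<Rightarrow> nat \<Rightarrow> nat \<Rightarrow> int" where
  "pm_root s a b = (if s then rplus a b else rminus a b)"

lemma lin_form_pm_root:
  "a \<in> {1..n} \<Longrightarrow> b \<in> {1..n} \<Longrightarrow> lin_form n \<phi> (pm_root s a b) = \<phi> a + (if s then \<phi> b else - \<phi> b)"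
  unfolding pm_root_def by (simp add: lin_form_rplus lin_form_rminus)

lemma root_le_prefix_mono:
  "root_le n \<alpha> \<beta> \<Longrightarrow> 2 \<le> n \<Longrightarrow>
    lin_form n (\<lambda>j. if j \<le> m then 1 else 0) \<alpha> \<le> lin_form n (\<lambda>j. if j \<le> m then 1 else 0) \<beta>"
  by (rule root_le_lin_form_mono) auto

lemma root_le_last_sign_mono:
  "root_le n \<alpha> \<beta> \<Longrightarrow> 2 \<le> n \<Longrightarrow>
    lin_form n (\<lambda>j. if j < n then 1 else -1) \<alpha> \<le> lin_form n (\<lambda>j. if j < n then 1 else -1) \<beta>"
  by (rule root_le_lin_form_mono) auto

lemma root_le_rplus_imp:
  assumes "root_le n (rplus a b) (rplus a' b')"
    and "1 \<le> a" "a < b" "b \<le> n" "1 \<le> a'" "a' < b'" "b' \<le> n"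
  shows "a' \<le> a \<and> b' \<le> b"
proof -
  have n: "2 \<le> n" and I: "a \<in> {1..n}" "b \<in> {1..n}" "a' \<in> {1..n}" "b' \<in> {1..n}"
    using assms by auto
  show ?thesis
    using root_le_prefix_mono[OF assms(1) n, of a] root_le_prefix_mono[OF assms(1) n, of b] assms
    by (auto simp: lin_form_rplus[OF I(1,2)] lin_form_rplus[OF I(3,4)] split: if_splits)
qed

lemma root_le_base_imp:
  assumes "root_le n (pm_root s a b) (pm_root t a' b')"
    and "1 \<le> a" "a \<le> k" "k < b" "b \<le> n" "1 \<le> a'" "a' \<le> k" "k < b'" "b' \<le> n"
  shows "a' \<le> a"
    and "\<not> s \<and> \<not> t \<and> b \<le> b' \<or> s \<and> t \<and> b' \<le> b \<or> \<not> s \<and> t \<and> \<not> (b = n \<and> b' = n)"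
proof -
  have n: "2 \<le> n" and I: "a \<in> {1..n}" "b \<in> {1..n}" "a' \<in> {1..n}" "b' \<in> {1..n}"
    using assms by auto
  note mono = root_le_prefix_mono[OF assms(1) n] root_le_last_sign_mono[OF assms(1) n]
  note lin = lin_form_pm_root[OF I(1,2)] lin_form_pm_root[OF I(3,4)]
  show "a' \<le> a"
    using mono(1)[of a] assms by (auto simp: lin split: if_splits)
  show "\<not> s \<and> \<not> t \<and> b \<le> b' \<or> s \<and> t \<and> b' \<le> b \<or> \<not> s \<and> t \<and> \<not> (b = n \<and> b' = n)"
    using mono(1)[of b] mono(1)[of b'] mono(1)[of n] mono(2) assms by (auto simp: lin split: if_splits)
qed

lemma rplus_apply: "rplus a b j = of_bool (j = a) + of_bool (j = b)"
  by (simp add: rplus_def ee_def)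

lemma rminus_apply: "rminus a b j = of_bool (j = a) - of_bool (j = b)"
  by (simp add: rminus_def ee_def)

lemma rplus_neq_rminus: "a' < b' \<Longrightarrow> rplus a b \<noteq> rminus a' b'"
  by (auto simp: fun_eq_iff rplus_apply rminus_apply dest: spec[of _ b'])

lemma rplus_eq_iff: "a < b \<Longrightarrow> a' < b' \<Longrightarrow> rplus a b = rplus a' b' \<longleftrightarrow> a = a' \<and> b = b'"
  by (auto simp: fun_eq_iff rplus_apply dest: spec[of _ a] spec[of _ b] spec[of _ a'])

lemma rminus_eq_iff: "a < b \<Longrightarrow> a' < b' \<Longrightarrow> rminus a b = rminus a' b' \<longleftrightarrow> a = a' \<and> b = b'"
  by (auto simp: fun_eq_iff rminus_apply dest: spec[of _ a] spec[of _ b])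

lemma rplus_in_pos_roots: "1 \<le> a \<Longrightarrow> a < b \<Longrightarrow> b \<le> n \<Longrightarrow> rplus a b \<in> pos_roots n"
  unfolding pos_roots_def by blast

lemma rminus_in_pos_roots: "1 \<le> a \<Longrightarrow> a < b \<Longrightarrow> b \<le> n \<Longrightarrow> rminus a b \<in> pos_roots n"
  unfolding pos_roots_def by blast

lemma signed_pair_in_pos_roots_iff:
  assumes "p \<noteq> q" "p \<in> {1..n}" "q \<in> {1..n}" "s = 1 \<or> s = -1" "t = 1 \<or> t = -1"
  shows "(\<lambda>j. s * ee p j + t * ee q j) \<in> pos_roots n \<longleftrightarrow> (if p < q then s = 1 else t = 1)"
proof
  assume "(\<lambda>j. s * ee p j + t * ee q j) \<in> pos_roots n"
  then obtain c d where cd: "1 \<le> c" "c < d" "d \<le> n"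
    and "(\<forall>j. s * ee p j + t * ee q j = ee c j + ee d j) \<or> (\<forall>j. s * ee p j + t * ee q j = ee c j - ee d j)"
    unfolding pos_roots_def by (auto simp: rplus_def rminus_def fun_eq_iff)
  then consider "\<forall>j. s * ee p j + t * ee q j = ee c j + ee d j" | "\<forall>j. s * ee p j + t * ee q j = ee c j - ee d j"
    by blast
  then show "if p < q then s = 1 else t = 1"
  proof cases
    case 1
    from 1[rule_format, of p] 1[rule_format, of q] 1[rule_format, of c] 1[rule_format, of d]
    show ?thesis using assms cd by (auto simp: ee_def split: if_splits)
  next
    case 2
    from 2[rule_format, of p] 2[rule_format, of q] 2[rule_format, of c] 2[rule_format, of d]
    show ?thesis using assms cd by (auto simp: ee_def split: if_splits)
  qed
next
  assume h: "if p < q then s = 1 else t = 1"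
  consider "p < q" "s = 1" | "q < p" "t = 1"
    using h assms(1) by (auto split: if_splits)
  then show "(\<lambda>j. s * ee p j + t * ee q j) \<in> pos_roots n"
  proof cases
    case 1
    then have "(\<lambda>j. s * ee p j + t * ee q j) \<in> {rplus p q, rminus p q}"
      using assms(5) by (auto simp: rplus_def rminus_def fun_eq_iff)
    then show ?thesis using 1 assms(2,3) rplus_in_pos_roots rminus_in_pos_roots by auto
  next
    case 2
    then have "(\<lambda>j. s * ee p j + t * ee q j) \<in> {rplus q p, rminus q p}"
      using assms(4) by (auto simp: rplus_def rminus_def fun_eq_iff)
    then show ?thesis using 2 assms(2,3) rplus_in_pos_roots rminus_in_pos_roots by auto
  qed
qed

lemma signed_perm_nonzero: "signed_perm n w \<Longrightarrow> a \<in> {1..n} \<Longrightarrow> w a \<noteq> 0"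
  using bij_betwE unfolding signed_perm_def by fastforce

lemma signed_perm_abs_in_range: "signed_perm n w \<Longrightarrow> a \<in> {1..n} \<Longrightarrow> nat \<bar>w a\<bar> \<in> {1..n}"
  using bij_betwE unfolding signed_perm_def by fastforce

lemma signed_perm_abs_inj:
  "signed_perm n w \<Longrightarrow> a \<in> {1..n} \<Longrightarrow> b \<in> {1..n} \<Longrightarrow> a \<noteq> b \<Longrightarrow> \<bar>w a\<bar> \<noteq> \<bar>w b\<bar>"
  unfolding signed_perm_def bij_betw_def inj_on_def by (metis nat_int abs_ge_zero int_nat_eq)

lemma act_ee:
  assumes "a \<in> {1..n}"
  shows "act n w (ee a) = (\<lambda>j. sgn (w a) * ee (nat \<bar>w a\<bar>) j)"
proof
  fix j
  have "act n w (ee a) j = (\<Sum>x\<in>{1..n}. if x = a then (if nat \<bar>w a\<bar> = j then sgn (w a) else 0) else 0)"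
    unfolding act_def by (rule sum.cong) (auto simp: ee_def)
  then show "act n w (ee a) j = sgn (w a) * ee (nat \<bar>w a\<bar>) j"
    using assms by (simp add: ee_def)
qed

lemma act_add: "act n w (\<lambda>j. u j + v j) = (\<lambda>j. act n w u j + act n w v j)"
  unfolding act_def fun_eq_iff sum.distrib[symmetric] by (auto intro: sum.cong simp: distrib_left)

lemma act_diff: "act n w (\<lambda>j. u j - v j) = (\<lambda>j. act n w u j - act n w v j)"
  unfolding act_def fun_eq_iff sum_subtractf[symmetric] by (auto intro: sum.cong simp: right_diff_distrib)

lemma act_rplus:
  "a \<in> {1..n} \<Longrightarrow> b \<in> {1..n} \<Longrightarrow>
    act n w (rplus a b) = (\<lambda>j. sgn (w a) * ee (nat \<bar>w a\<bar>) j + sgn (w b) * ee (nat \<bar>w b\<bar>) j)"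
  unfolding rplus_def by (simp add: act_add act_ee)

lemma act_rminus:
  "a \<in> {1..n} \<Longrightarrow> b \<in> {1..n} \<Longrightarrow>
    act n w (rminus a b) = (\<lambda>j. sgn (w a) * ee (nat \<bar>w a\<bar>) j - sgn (w b) * ee (nat \<bar>w b\<bar>) j)"
  unfolding rminus_def by (simp add: act_diff act_ee)

lemma Inv_signed_pair_iff:
  assumes w: "signed_perm n w" and ab: "1 \<le> a" "a < b" "b \<le> n" and s: "s = 1 \<or> s = -1"
    and \<alpha>: "\<alpha> \<in> pos_roots n" "act n w \<alpha> = (\<lambda>j. sgn (w a) * ee (nat \<bar>w a\<bar>) j + s * sgn (w b) * ee (nat \<bar>w b\<bar>) j)"
  shows "\<alpha> \<in> Inv n w \<longleftrightarrow> (\<bar>w a\<bar> < \<bar>w b\<bar> \<and> w a < 0) \<or> (\<bar>w b\<bar> < \<bar>w a\<bar> \<and> s * w b < 0)"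
proof -
  have I: "a \<in> {1..n}" "b \<in> {1..n}" using ab by auto
  note r = signed_perm_abs_in_range[OF w I(1)] signed_perm_nonzero[OF w I(1)]
    signed_perm_abs_in_range[OF w I(2)] signed_perm_nonzero[OF w I(2)]
  have ne: "\<bar>w a\<bar> \<noteq> \<bar>w b\<bar>" using signed_perm_abs_inj[OF w I] ab by simp
  have "(\<lambda>j. - act n w \<alpha> j) = (\<lambda>j. (- sgn (w a)) * ee (nat \<bar>w a\<bar>) j + (- s * sgn (w b)) * ee (nat \<bar>w b\<bar>) j)"
    using \<alpha>(2) by simp
  moreover have "\<dots> \<in> pos_roots n \<longleftrightarrow>
      (if nat \<bar>w a\<bar> < nat \<bar>w b\<bar> then - sgn (w a) = 1 else - s * sgn (w b) = 1)"
    using r ne s by (intro signed_pair_in_pos_roots_iff) (auto simp: sgn_if)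
  ultimately show ?thesis
    unfolding Inv_def using \<alpha>(1) r ne s by (auto simp: sgn_if)
qed

lemma Inv_rplus_iff:
  "signed_perm n w \<Longrightarrow> 1 \<le> a \<Longrightarrow> a < b \<Longrightarrow> b \<le> n \<Longrightarrow>
    rplus a b \<in> Inv n w \<longleftrightarrow> (\<bar>w a\<bar> < \<bar>w b\<bar> \<and> w a < 0) \<or> (\<bar>w b\<bar> < \<bar>w a\<bar> \<and> w b < 0)"
  using Inv_signed_pair_iff[where s = 1 and \<alpha> = "rplus a b"] rplus_in_pos_roots act_rplus by simp

lemma Inv_rminus_iff:
  "signed_perm n w \<Longrightarrow> 1 \<le> a \<Longrightarrow> a < b \<Longrightarrow> b \<le> n \<Longrightarrow>
    rminus a b \<in> Inv n w \<longleftrightarrow> (\<bar>w a\<bar> < \<bar>w b\<bar> \<and> w a < 0) \<or> (\<bar>w b\<bar> < \<bar>w a\<bar> \<and> 0 < w b)"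
  using Inv_signed_pair_iff[where s = "-1" and \<alpha> = "rminus a b"] rminus_in_pos_roots act_rminus by simp

lemma Inv_pm_root_iff:
  "signed_perm n w \<Longrightarrow> 1 \<le> a \<Longrightarrow> a < b \<Longrightarrow> b \<le> n \<Longrightarrow>
    pm_root s a b \<in> Inv n w \<longleftrightarrow>
      (\<bar>w a\<bar> < \<bar>w b\<bar> \<and> w a < 0) \<or> (\<bar>w b\<bar> < \<bar>w a\<bar> \<and> (if s then w b < 0 else 0 < w b))"
  unfolding pm_root_def using Inv_rplus_iff Inv_rminus_iff by simp

lemma W_OG_signed_perm: "w \<in> W_OG k n \<Longrightarrow> signed_perm n w"
  unfolding W_OG_def by blast

lemma W_OG_head_pos:
  assumes "w \<in> W_OG k n" "1 \<le> a" "a < b" "b \<le> k" "0 < w b"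
  shows "0 < w a \<and> w a < w b"
proof -
  obtain r where "\<forall>a \<in> {1..k - r}. w a > 0" "\<forall>a b. 1 \<le> a \<longrightarrow> a < b \<longrightarrow> b \<le> k - r \<longrightarrow> w a < w b"
    "\<forall>a \<in> {k - r + 1..k}. w a < 0"
    using assms(1) unfolding W_OG_def by blast
  moreover from bspec[OF this(3), of b] have "b \<le> k - r" using assms(4,5) by fastforce
  ultimately show ?thesis using assms(2,3) by auto
qed

lemma W_OG_head_neg:
  assumes "w \<in> W_OG k n" "1 \<le> a" "a < b" "b \<le> k" "w a < 0"
  shows "w b < 0 \<and> \<bar>w b\<bar> < \<bar>w a\<bar>"
proof -
  obtain r where "\<forall>a \<in> {1..k - r}. w a > 0" "\<forall>a \<in> {k - r + 1..k}. w a < 0"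
    "\<forall>a b. k - r < a \<longrightarrow> a < b \<longrightarrow> b \<le> k \<longrightarrow> \<bar>w a\<bar> > \<bar>w b\<bar>"
    using assms(1) unfolding W_OG_def by blast
  moreover from bspec[OF this(1), of a] have "k - r < a" using assms(2,5) by fastforce
  ultimately show ?thesis using assms(3,4) by auto
qed

lemma W_OG_tail:
  assumes "w \<in> W_OG k n" "k < a" "a < b" "b \<le> n"
  shows "0 < w a \<and> \<bar>w a\<bar> < \<bar>w b\<bar>"
  using assms unfolding W_OG_def by auto

lemma Inv_W_OG_subset_regions:
  assumes w: "w \<in> W_OG k n"
  shows "Inv n w \<subseteq> base_region k n \<union> top_region k"
proof
  fix x assume x: "x \<in> Inv n w"
  have sp: "signed_perm n w" using W_OG_signed_perm[OF w] .
  from x obtain a b where ab: "1 \<le> a" "a < b" "b \<le> n" and xe: "x = rplus a b \<or> x = rminus a b"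
    unfolding Inv_def pos_roots_def by blast
  consider "a \<le> k" "k < b" | "b \<le> k" "x = rplus a b" | "b \<le> k" "x = rminus a b" | "k < a"
    using xe by linarith
  then show "x \<in> base_region k n \<union> top_region k"
  proof cases
    case 1 then show ?thesis using xe ab unfolding base_region_def by blast
  next
    case 2 then show ?thesis using ab unfolding top_region_def by blast
  next
    case 3
    then have "x \<notin> Inv n w"
      using W_OG_head_pos[OF w ab(1,2)] W_OG_head_neg[OF w ab(1,2)] Inv_rminus_iff[OF sp ab] by auto
    then show ?thesis using x by simp
  next
    case 4
    then have "x \<notin> Inv n w"
      using W_OG_tail[OF w 4 ab(2,3)] xe Inv_rminus_iff[OF sp ab] Inv_rplus_iff[OF sp ab] by auto
    then show ?thesis using x by simp
  qed
qed

lemma Inv_W_OG_top_iff: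
  assumes w: "w \<in> W_OG k n" and kn: "k \<le> n" and ab: "1 \<le> a" "a < b" "b \<le> k"
  shows "rplus a b \<in> Inv n w \<longleftrightarrow> w b < 0 \<and> (w a < 0 \<or> \<bar>w b\<bar> < w a)"
proof -
  have sp: "signed_perm n w" using W_OG_signed_perm[OF w] .
  have "w a \<noteq> 0" using signed_perm_nonzero[OF sp] ab kn by simp
  then show ?thesis
    using Inv_rplus_iff[OF sp ab(1,2)] W_OG_head_neg[OF w ab] ab kn by auto
qed

lemma Inv_W_OG_top_lower_ideal:
  assumes w: "w \<in> W_OG k n" and kn: "k < n"
  shows "lower_ideal n (top_region k) (Inv n w \<inter> top_region k)"
  unfolding lower_ideal_def
proof (intro conjI ballI impI)
  fix \<beta> \<alpha> assume \<beta>: "\<beta> \<in> Inv n w \<inter> top_region k" and \<alpha>: "\<alpha> \<in> top_region k" and le: "root_le n \<alpha> \<beta>"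
  obtain a b where \<alpha>_eq: "\<alpha> = rplus a b" and ab: "1 \<le> a" "a < b" "b \<le> k"
    using \<alpha> unfolding top_region_def by blast
  obtain a' b' where \<beta>_eq: "\<beta> = rplus a' b'" and ab': "1 \<le> a'" "a' < b'" "b' \<le> k"
    using \<beta> unfolding top_region_def by blast
  have "a' \<le> a" "b' \<le> b"
    using root_le_rplus_imp[OF le[unfolded \<alpha>_eq \<beta>_eq]] ab ab' kn by auto
  then have A: "0 < w a \<Longrightarrow> 0 < w a' \<and> w a' \<le> w a" and B: "w b' < 0 \<Longrightarrow> w b < 0 \<and> \<bar>w b\<bar> \<le> \<bar>w b'\<bar>"
    using W_OG_head_pos[OF w, of a' a] W_OG_head_neg[OF w, of b' b] ab ab' by force+
  have "w b' < 0 \<and> (w a' < 0 \<or> \<bar>w b'\<bar> < w a')"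
    using \<beta> Inv_W_OG_top_iff[OF w less_imp_le[OF kn] ab'] unfolding \<beta>_eq by blast
  moreover have "w a \<noteq> 0" using signed_perm_nonzero[OF W_OG_signed_perm[OF w]] ab kn by simp
  ultimately have "\<alpha> \<in> Inv n w"
    unfolding \<alpha>_eq Inv_W_OG_top_iff[OF w less_imp_le[OF kn] ab] using A B by force
  then show "\<alpha> \<in> Inv n w \<inter> top_region k" using \<alpha> by simp
qed simp

lemma Inv_W_OG_base_row:
  assumes w: "w \<in> W_OG k n" and a: "1 \<le> a" "a \<le> k" and b: "k < b" "b \<le> n" "k < b'" "b' \<le> n"
    and order: "\<not> s \<and> \<not> t \<and> b \<le> b' \<or> s \<and> t \<and> b' \<le> b \<or> \<not> s \<and> t \<and> \<not> (b = n \<and> b' = n)"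
    and inv: "pm_root t a b' \<in> Inv n w"
  shows "pm_root s a b \<in> Inv n w"
proof -
  have sp: "signed_perm n w" using W_OG_signed_perm[OF w] .
  have I: "a \<in> {1..n}" "b \<in> {1..n}" "b' \<in> {1..n}" and ab: "a < b" "a < b'" using a b by auto
  have nz: "w a \<noteq> 0" "w b \<noteq> 0" using signed_perm_nonzero[OF sp] I by auto
  have inj: "\<bar>w a\<bar> \<noteq> \<bar>w b\<bar>" "\<bar>w a\<bar> \<noteq> \<bar>w b'\<bar>" using signed_perm_abs_inj[OF sp] I a b by auto
  have tail: "b < b' \<Longrightarrow> \<bar>w b\<bar> < \<bar>w b'\<bar>" "b' < b \<Longrightarrow> \<bar>w b'\<bar> < \<bar>w b\<bar>"
    "b < n \<Longrightarrow> 0 < w b" "b' < n \<Longrightarrow> 0 < w b'"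
    using W_OG_tail[OF w, of b b'] W_OG_tail[OF w, of b' b] W_OG_tail[OF w, of b n]
      W_OG_tail[OF w, of b' n] b by auto
  have inv': "(\<bar>w a\<bar> < \<bar>w b'\<bar> \<and> w a < 0) \<or> (\<bar>w b'\<bar> < \<bar>w a\<bar> \<and> (if t then w b' < 0 else 0 < w b'))"
    using inv Inv_pm_root_iff[OF sp a(1) ab(2) b(4)] by simp
  have "(\<bar>w a\<bar> < \<bar>w b\<bar> \<and> w a < 0) \<or> (\<bar>w b\<bar> < \<bar>w a\<bar> \<and> (if s then w b < 0 else 0 < w b))"
  proof (cases "b = b'")
    case True
    then show ?thesis using order tail(3) inv' b by (cases s; cases t) auto
  next
    case False
    from order consider "\<not> s" "\<not> t" "b < b'" | s t "b' < b" | "\<not> s" t "b < n \<or> b' < n"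
      using False b by force
    then show ?thesis
    proof cases
      case 1
      then show ?thesis using tail(1,3) b inv' inj by auto
    next
      case 2
      then show ?thesis using tail(2,4) b inv' by auto
    next
      case 3
      then show ?thesis using tail inv' inj nz b False by (cases "b < b'") auto
    qed
  qed
  then show ?thesis using Inv_pm_root_iff[OF sp a(1) ab(1) b(2)] by simp
qed

lemma Inv_W_OG_base_column:
  assumes w: "w \<in> W_OG k n" and a: "1 \<le> a'" "a' \<le> a" "a \<le> k" and b: "k < b" "b \<le> n"
    and inv: "pm_root s a' b \<in> Inv n w"
  shows "pm_root s a b \<in> Inv n w"
proof (cases "a' = a")
  case False
  have sp: "signed_perm n w" using W_OG_signed_perm[OF w] .
  have I: "a \<in> {1..n}" "b \<in> {1..n}" using a b by auto
  have nz: "w a \<noteq> 0" "w b \<noteq> 0" using signed_perm_nonzero[OF sp] I by auto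
  have inj: "\<bar>w a\<bar> \<noteq> \<bar>w b\<bar>" using signed_perm_abs_inj[OF sp I] a b by auto
  have head: "0 < w a \<Longrightarrow> 0 < w a' \<and> w a' < w a" "w a' < 0 \<Longrightarrow> w a < 0 \<and> \<bar>w a\<bar> < \<bar>w a'\<bar>"
    using W_OG_head_pos[OF w, of a' a] W_OG_head_neg[OF w, of a' a] a False by auto
  have "(\<bar>w a'\<bar> < \<bar>w b\<bar> \<and> w a' < 0) \<or> (\<bar>w b\<bar> < \<bar>w a'\<bar> \<and> (if s then w b < 0 else 0 < w b))"
    using inv Inv_pm_root_iff[OF sp a(1) _ b(2)] a b by simp
  then have "(\<bar>w a\<bar> < \<bar>w b\<bar> \<and> w a < 0) \<or> (\<bar>w b\<bar> < \<bar>w a\<bar> \<and> (if s then w b < 0 else 0 < w b))"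
    using nz inj head by (cases "w a < 0") auto
  then show ?thesis using Inv_pm_root_iff[OF sp _ _ b(2)] a b by simp
qed (use inv in simp)

lemma base_region_pm_root:
  assumes "x \<in> base_region k n"
  obtains s a b where "x = pm_root s a b" "1 \<le> a" "a \<le> k" "k < b" "b \<le> n"
proof -
  from assms obtain a b where "x = rplus a b \<or> x = rminus a b" "1 \<le> a" "a \<le> k" "k < b" "b \<le> n"
    unfolding base_region_def by blast
  then show thesis using that[of True a b] that[of False a b] unfolding pm_root_def by auto
qed

lemma Inv_W_OG_base_lower_ideal:
  assumes w: "w \<in> W_OG k n"
  shows "lower_ideal n (base_region k n) (Inv n w \<inter> base_region k n)"
  unfolding lower_ideal_def
proof (intro conjI ballI impI)
  fix \<beta> \<alpha> assume \<beta>: "\<beta> \<in> Inv n w \<inter> base_region k n" and \<alpha>: "\<alpha> \<in> base_region k n"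
    and le: "root_le n \<alpha> \<beta>"
  obtain s a b where \<alpha>_eq: "\<alpha> = pm_root s a b" and ab: "1 \<le> a" "a \<le> k" "k < b" "b \<le> n"
    using \<alpha> by (rule base_region_pm_root)
  obtain t a' b' where \<beta>_eq: "\<beta> = pm_root t a' b'" and ab': "1 \<le> a'" "a' \<le> k" "k < b'" "b' \<le> n"
    using \<beta> by (blast elim: base_region_pm_root)
  note order = root_le_base_imp[OF le[unfolded \<alpha>_eq \<beta>_eq] ab ab']
  have "pm_root s a' b \<in> Inv n w"
    using Inv_W_OG_base_row[OF w ab'(1,2) ab(3,4) ab'(3,4) order(2)] \<beta> \<beta>_eq by simp
  then have "\<alpha> \<in> Inv n w"
    unfolding \<alpha>_eq using Inv_W_OG_base_column[OF w ab'(1) order(1) ab(2-4)] by simp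
  then show "\<alpha> \<in> Inv n w \<inter> base_region k n" using \<alpha> by simp
qed simp

lemma card_Int_doubleton: "p \<noteq> q \<Longrightarrow> card (S \<inter> {p, q}) = of_bool (p \<in> S) + of_bool (q \<in> S)"
  by (cases "p \<in> S"; cases "q \<in> S") (auto simp: Int_insert_right)

lemma card_Inv_rminus_rplus:
  assumes w: "signed_perm n w" and xc: "1 \<le> x" "x < c" "c \<le> n"
  shows "card (Inv n w \<inter> {rminus x c, rplus x c})
       = (if 0 < w x then of_bool (\<bar>w c\<bar> < \<bar>w x\<bar>) else if \<bar>w x\<bar> < \<bar>w c\<bar> then 2 else 1)"
proof -
  have I: "x \<in> {1..n}" "c \<in> {1..n}" using xc by auto
  have "w x \<noteq> 0" "w c \<noteq> 0" "\<bar>w x\<bar> \<noteq> \<bar>w c\<bar>"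
    using signed_perm_nonzero[OF w] signed_perm_abs_inj[OF w I] I xc by auto
  then show ?thesis
    using rplus_neq_rminus[OF xc(2), of x c]
    by (auto simp: card_Int_doubleton Inv_rminus_iff[OF w xc] Inv_rplus_iff[OF w xc])
qed

lemma diamond_eq_UN: "a \<le> k \<Longrightarrow> diamond k n (k + 1 - a) = (\<Union>c\<in>{k<..n}. {rminus a c, rplus a c})"
  unfolding diamond_def by auto

lemma card_Int_diamonds:
  assumes ab: "a < b" "b \<le> k"
  shows "card (S \<inter> (diamond k n (k + 1 - a) \<union> diamond k n (k + 1 - b)))
       = (\<Sum>c\<in>{k<..n}. card (S \<inter> {rminus a c, rplus a c}) + card (S \<inter> {rminus b c, rplus b c}))"
proof -
  let ?P = "\<lambda>x c. S \<inter> {rminus x c, rplus x c}"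
  have "a \<le> k" using ab by simp
  have "S \<inter> (diamond k n (k + 1 - a) \<union> diamond k n (k + 1 - b)) = (\<Union>c\<in>{k<..n}. ?P a c \<union> ?P b c)"
    unfolding diamond_eq_UN[OF \<open>a \<le> k\<close>] diamond_eq_UN[OF ab(2)] by auto
  moreover have "card (\<Union>c\<in>{k<..n}. ?P a c \<union> ?P b c) = (\<Sum>c\<in>{k<..n}. card (?P a c \<union> ?P b c))"
    using ab by (intro card_UN_disjoint)
      (auto simp: rplus_eq_iff rminus_eq_iff rplus_neq_rminus rplus_neq_rminus[THEN not_sym])
  moreover have "card (?P a c \<union> ?P b c) = card (?P a c) + card (?P b c)" if "c \<in> {k<..n}" for c
    using ab that by (intro card_Un_disjoint)
      (auto simp: rplus_eq_iff rminus_eq_iff rplus_neq_rminus rplus_neq_rminus[THEN not_sym])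
  ultimately show ?thesis by simp
qed

lemma Inv_W_OG_column_count:
  assumes w: "w \<in> W_OG k n" and ab: "1 \<le> a" "a < b" "b \<le> k" and c: "k < c" "c \<le> n"
  defines "m \<equiv> card (Inv n w \<inter> {rminus a c, rplus a c}) + card (Inv n w \<inter> {rminus b c, rplus b c})"
  shows "rplus a b \<in> Inv n w \<Longrightarrow> 2 \<le> m" and "rplus a b \<notin> Inv n w \<Longrightarrow> m \<le> 2"
proof -
  have sp: "signed_perm n w" using W_OG_signed_perm[OF w] .
  have I: "a \<in> {1..n}" "b \<in> {1..n}" using ab c by auto
  have "w a \<noteq> 0" "w b \<noteq> 0" "\<bar>w a\<bar> \<noteq> \<bar>w b\<bar>"
    using signed_perm_nonzero[OF sp] signed_perm_abs_inj[OF sp I] I ab by auto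
  moreover have "m = (if 0 < w a then of_bool (\<bar>w c\<bar> < \<bar>w a\<bar>) else if \<bar>w a\<bar> < \<bar>w c\<bar> then 2 else 1)
      + (if 0 < w b then of_bool (\<bar>w c\<bar> < \<bar>w b\<bar>) else if \<bar>w b\<bar> < \<bar>w c\<bar> then 2 else 1)"
    unfolding m_def using card_Inv_rminus_rplus[OF sp] ab c by simp
  moreover note Inv_W_OG_top_iff[OF w _ ab] W_OG_head_neg[OF w ab]
  ultimately show "rplus a b \<in> Inv n w \<Longrightarrow> 2 \<le> m" and "rplus a b \<notin> Inv n w \<Longrightarrow> m \<le> 2"
    using c by (auto simp: abs_if split: if_splits)
qed

lemma card_Inv_W_OG_diamonds:
  assumes w: "w \<in> W_OG k n" and ab: "1 \<le> a" "a < b" "b \<le> k"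
  defines "m \<equiv> card (Inv n w \<inter> (diamond k n (k + 1 - a) \<union> diamond k n (k + 1 - b)))"
  shows "rplus a b \<in> Inv n w \<Longrightarrow> 2 * n - 2 * k \<le> m" and "rplus a b \<notin> Inv n w \<Longrightarrow> m \<le> 2 * n - 2 * k"
proof -
  have two: "(\<Sum>c\<in>{k<..n}. 2) = 2 * n - 2 * k" by simp
  note count = Inv_W_OG_column_count[OF w ab]
  show "rplus a b \<in> Inv n w \<Longrightarrow> 2 * n - 2 * k \<le> m"
    unfolding m_def card_Int_diamonds[OF ab(2,3)] two[symmetric] using count(1) by (intro sum_mono) auto
  show "rplus a b \<notin> Inv n w \<Longrightarrow> m \<le> 2 * n - 2 * k"
    unfolding m_def card_Int_diamonds[OF ab(2,3)] two[symmetric] using count(2) by (intro sum_mono) auto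
qed

theorem lemma3p13:
  fixes k n :: nat
  assumes "1 \<le> k" and "k < n"
  shows "Y_OG k n \<subseteq> Theta k n"
proof
  fix S assume "S \<in> Y_OG k n"
  then obtain w where w: "w \<in> W_OG k n" and S: "S = Inv n w" unfolding Y_OG_def by auto
  show "S \<in> Theta k n"
    unfolding Theta_def S
    using Inv_W_OG_subset_regions[OF w] Inv_W_OG_base_lower_ideal[OF w]
      Inv_W_OG_top_lower_ideal[OF w assms(2)] card_Inv_W_OG_diamonds[OF w]
    by (fastforce simp: not_le[symmetric])
qed

end
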